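(* Let $M$ be a commutative von Neumann algebra with a faithful normal finite trace $\tau$ such that the Boolean algebra $P(M)$ of all projections of $M$ is continuous (has no atoms), and let $\Lambda$ be a quadratic family of Young functions. Then every additive derivation on $L^{\Lambda}(M,\tau)$ is identically zero.
   Context: For a von Neumann algebra $N$ with faithful normal trace $\tau$, $S(N,\tau)$ is the *-algebra of $\tau$-measurable operators affiliated with $N$. A Young function is $\phi(t)=\int_0^t\varphi(s)ds$ with $\varphi\ge0$ right continuous, nondecreasing, $\varphi(0)=0$, $\varphi(s)>0$ for $s>0$, $\varphi(s)\to\infty$. $L_\phi(N,\tau)=\bigcup_n n\{x\in S(N,\tau):\tau(\phi(|x|))\le1\}$. $\phi_1\prec\phi_2$ means $\phi_1(t)\le\phi_2(ct)$ for $t\ge T$, some $c,T\ge0$. A family $\Lambda$ is quadratic if any two members are $\prec$ some member and for each $\phi\in\Lambda$ there are $\psi\in\Lambda$, $c>0,T\ge0$ with $\phi(t^2)\le\psi(ct)$ for $t\ge T$. $L^\Lambda(N,\tau)=\bigcap_{\phi\in\Lambda}L_\phi(N,\tau)$. An additive derivation is an additive map $\delta$ with $\delta(xy)=\delta(x)y+x\delta(y)$. *)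

theory Defs
  imports "HOL-Analysis.Analysis"
begin

text \<open>Commutative von Neumann algebra M with faithful normal finite trace tau is modelled
  as L-infinity(Omega, Sigma, mu) with mu a finite measure and tau(f) = integral of f d mu.
  Then S(M,tau) is the algebra of (classes of) measurable complex functions; elements are
  represented by functions, identified up to mu-a.e. equality.\<close>

text \<open>Projections of M are classes of measurable sets modulo null sets; the Boolean
  algebra P(M) has no atoms iff the measure has no atoms.\<close>
definition atomless_measure :: "'a measure \<Rightarrow> bool" where
  "atomless_measure M \<longleftrightarrow>
     (\<forall>A\<in>sets M. emeasure M A > 0 \<longrightarrow>
        (\<exists>B\<in>sets M. B \<subseteq> A \<and> 0 < emeasure M B \<and> emeasure M B < emeasure M A))"

definition young_function :: "(real \<Rightarrow> real) \<Rightarrow> bool" where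
  "young_function \<phi> \<longleftrightarrow>
     (\<exists>\<psi> :: real \<Rightarrow> real.
        (\<forall>s\<ge>0. \<psi> s \<ge> 0) \<and>
        (\<forall>s\<ge>0. continuous (at_right s) \<psi>) \<and>
        mono_on {0..} \<psi> \<and>
        \<psi> 0 = 0 \<and>
        (\<forall>s>0. \<psi> s > 0) \<and>
        filterlim \<psi> at_top at_top \<and>
        (\<forall>t\<ge>0. \<phi> t = integral {0..t} \<psi>))"

definition young_prec :: "(real \<Rightarrow> real) \<Rightarrow> (real \<Rightarrow> real) \<Rightarrow> bool" where
  "young_prec \<phi>1 \<phi>2 \<longleftrightarrow> (\<exists>c T. c \<ge> 0 \<and> T \<ge> 0 \<and> (\<forall>t\<ge>T. \<phi>1 t \<le> \<phi>2 (c * t)))"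

definition quadratic_family :: "(real \<Rightarrow> real) set \<Rightarrow> bool" where
  "quadratic_family \<Lambda> \<longleftrightarrow>
     (\<forall>\<phi>\<in>\<Lambda>. young_function \<phi>) \<and>
     (\<forall>\<phi>1\<in>\<Lambda>. \<forall>\<phi>2\<in>\<Lambda>. \<exists>\<phi>\<in>\<Lambda>. young_prec \<phi>1 \<phi> \<and> young_prec \<phi>2 \<phi>) \<and>
     (\<forall>\<phi>\<in>\<Lambda>. \<exists>\<psi>\<in>\<Lambda>. \<exists>c>0. \<exists>T\<ge>0. \<forall>t\<ge>T. \<phi> (t\<^sup>2) \<le> \<psi> (c * t))"

definition orlicz_space :: "'a measure \<Rightarrow> (real \<Rightarrow> real) \<Rightarrow> ('a \<Rightarrow> complex) set" where
  "orlicz_space M \<phi> =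
     {x \<in> borel_measurable M. \<exists>n::nat. n > 0 \<and>
        (\<integral>\<^sup>+ \<omega>. ennreal (\<phi> (cmod (x \<omega>) / real n)) \<partial>M) \<le> 1}"

definition orlicz_intersection :: "'a measure \<Rightarrow> (real \<Rightarrow> real) set \<Rightarrow> ('a \<Rightarrow> complex) set" where
  "orlicz_intersection M \<Lambda> = {x \<in> borel_measurable M. \<forall>\<phi>\<in>\<Lambda>. x \<in> orlicz_space M \<phi>}"

text \<open>An additive derivation on the quotient algebra L, given via representatives.\<close>
definition additive_derivation_on ::
  "'a measure \<Rightarrow> ('a \<Rightarrow> complex) set \<Rightarrow> (('a \<Rightarrow> complex) \<Rightarrow> ('a \<Rightarrow> complex)) \<Rightarrow> bool" where
  "additive_derivation_on M L \<delta> \<longleftrightarrow>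
     (\<forall>x\<in>L. \<delta> x \<in> L) \<and>
     (\<forall>x\<in>L. \<forall>y\<in>L. (AE \<omega> in M. x \<omega> = y \<omega>) \<longrightarrow> (AE \<omega> in M. \<delta> x \<omega> = \<delta> y \<omega>)) \<and>
     (\<forall>x\<in>L. \<forall>y\<in>L. AE \<omega> in M. \<delta> (\<lambda>w. x w + y w) \<omega> = \<delta> x \<omega> + \<delta> y \<omega>) \<and>
     (\<forall>x\<in>L. \<forall>y\<in>L. AE \<omega> in M. \<delta> (\<lambda>w. x w * y w) \<omega> = \<delta> x \<omega> * y \<omega> + x \<omega> * \<delta> y \<omega>)"

end

theory Submission
  imports Defs
begin

text \<open>An additive derivation \<open>\<delta>\<close> kills the constants of \<open>\<rat>(\<i>)\<close>, and it is local:
  \<open>\<delta>(\<chi>\<^sub>S x) = \<chi>\<^sub>S \<delta>(x)\<close> because \<open>\<delta>(\<chi>\<^sub>S) = 0\<close> for idempotents. Hence \<open>\<delta>\<close> vanishes on functions with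
  values in a countable subset of \<open>\<rat>(\<i>)\<close>, and rounding a bounded \<open>g\<close> to the lattice
  \<open>(\<int> + \<i>\<int>)/N\<close> gives \<open>\<delta>(c\<^sub>N) = N \<delta>(g)\<close> for the error \<open>c\<^sub>N = N(g - round\<^sub>N g)\<close>, which is
  bounded by 2 independently of \<open>N\<close>. If \<open>\<delta>(g) \<noteq> 0\<close>, atomlessness splits \<open>{|\<delta>(g)| > \<epsilon>}\<close> into
  infinitely many disjoint pieces of positive measure; gluing \<open>c\<^bsub>N\<^sub>n\<^esub>\<close> on the \<open>n\<close>-th piece yields a
  bounded \<open>y\<close> with \<open>|\<delta>(y)| \<ge> N\<^sub>n \<epsilon>\<close> there, and for \<open>N\<^sub>n\<close> large \<open>\<delta>(y)\<close> lies in no Orlicz ball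
  \<open>n \<cdot> {x. \<tau>(\<phi>(|x|)) \<le> 1}\<close>. Unbounded elements are handled by truncation and locality.\<close>

lemma young_functionE:
  assumes "young_function \<phi>"
  obtains \<psi> where "\<And>s. 0 \<le> s \<Longrightarrow> 0 \<le> \<psi> s" "mono_on {0..} \<psi>" "0 < \<psi> 1"
    "\<And>t. 0 \<le> t \<Longrightarrow> \<phi> t = integral {0..t} \<psi>" "\<And>a b. 0 \<le> a \<Longrightarrow> \<psi> integrable_on {a..b}"
proof -
  obtain \<psi> :: "real \<Rightarrow> real" where "\<forall>s\<ge>0. \<psi> s \<ge> 0" "mono_on {0..} \<psi>"
    "\<forall>s>0. \<psi> s > 0" "\<forall>t\<ge>0. \<phi> t = integral {0..t} \<psi>"
    using assms unfolding young_function_def by blast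
  moreover have "\<psi> integrable_on {a..b}" if "0 \<le> a" for a b
    by (rule integrable_on_mono_on, rule mono_on_subset[OF \<open>mono_on {0..} \<psi>\<close>]) (use that in auto)
  ultimately show thesis by (intro that[of \<psi>]) auto
qed

lemma young_function_nonneg:
  assumes "young_function \<phi>" "0 \<le> t"
  shows "0 \<le> \<phi> t"
  using assms by (elim young_functionE) (auto intro!: integral_nonneg)

lemma young_function_mono_on:
  assumes "young_function \<phi>"
  shows "mono_on {0..} \<phi>"
  using assms by (elim young_functionE) (auto intro!: mono_onI integral_subset_le)

lemma young_function_le_linear:
  assumes "young_function \<phi>"
  obtains c where "\<And>t. 0 \<le> t \<Longrightarrow> t \<le> 1 \<Longrightarrow> \<phi> t \<le> c * t"
proof -
  obtain \<psi> where \<psi>: "mono_on {0..} \<psi>" "\<And>t. 0 \<le> t \<Longrightarrow> \<phi> t = integral {0..t} \<psi>"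
    "\<And>a b. 0 \<le> a \<Longrightarrow> \<psi> integrable_on {a..b}"
    using young_functionE[OF assms] by metis
  have "\<phi> t \<le> \<psi> 1 * t" if "0 \<le> t" "t \<le> 1" for t
  proof -
    have "integral {0..t} \<psi> \<le> integral {0..t} (\<lambda>_. \<psi> 1)"
      by (rule integral_le) (use \<psi>(1,3) that in \<open>auto simp: mono_on_def\<close>)
    then show ?thesis using \<psi>(2) that by (simp add: mult.commute)
  qed
  then show thesis by (rule that)
qed

lemma young_function_at_top:
  assumes "young_function \<phi>"
  shows "filterlim \<phi> at_top at_top"
proof -
  obtain \<psi> where \<psi>: "\<And>s. 0 \<le> s \<Longrightarrow> 0 \<le> \<psi> s" "mono_on {0..} \<psi>" "0 < \<psi> 1"
    "\<And>t. 0 \<le> t \<Longrightarrow> \<phi> t = integral {0..t} \<psi>" "\<And>a b. 0 \<le> a \<Longrightarrow> \<psi> integrable_on {a..b}"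
    using young_functionE[OF assms] by metis
  have bound: "\<psi> 1 * (- 1 + t) \<le> \<phi> t" if "1 \<le> t" for t
  proof -
    have "\<psi> 1 * (- 1 + t) = integral {1..t} (\<lambda>_. \<psi> 1)" using that by simp
    also have "\<dots> \<le> integral {1..t} \<psi>"
      by (rule integral_le) (use \<psi>(2,5) that in \<open>auto simp: mono_on_def\<close>)
    also have "\<dots> \<le> integral {0..t} \<psi>"
      by (rule integral_subset_le) (use \<psi>(1,5) in auto)
    finally show ?thesis using \<psi>(4) that by simp
  qed
  have lim: "filterlim (\<lambda>t. \<psi> 1 * (- 1 + t)) at_top at_top"
    by (intro filterlim_tendsto_pos_mult_at_top[OF tendsto_const \<psi>(3)]
        filterlim_tendsto_add_at_top[OF tendsto_const filterlim_ident])
  show ?thesis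
    by (rule filterlim_at_top_mono[OF lim]) (use bound in \<open>auto simp: eventually_at_top_linorder\<close>)
qed

lemma young_function_exceeds:
  assumes "young_function \<phi>" "0 < a"
  shows "\<exists>N :: nat. B \<le> \<phi> (real N * a)"
proof -
  have "filterlim (\<lambda>N. real N * a) at_top sequentially"
    by (rule filterlim_at_top_mult_tendsto_pos[OF tendsto_const assms(2) filterlim_real_sequentially])
  then have "filterlim (\<lambda>N. \<phi> (real N * a)) at_top sequentially"
    by (rule filterlim_compose[OF young_function_at_top[OF assms(1)]])
  then show ?thesis by (auto simp: filterlim_at_top eventually_sequentially)
qed

lemma orlicz_space_bounded:
  assumes M: "finite_measure M" and \<phi>: "young_function \<phi>"
    and g: "g \<in> borel_measurable M" "\<And>\<omega>. cmod (g \<omega>) \<le> K"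
  shows "g \<in> orlicz_space M \<phi>"
proof -
  have K: "0 \<le> K" using g(2)[of undefined] by (rule order_trans[OF norm_ge_zero])
  obtain c where c: "\<And>t. 0 \<le> t \<Longrightarrow> t \<le> 1 \<Longrightarrow> \<phi> t \<le> c * t"
    using young_function_le_linear[OF \<phi>] by blast
  define \<mu> where "\<mu> = measure M (space M)"
  define C where "C = max c 0"
  define n :: nat where "n = Suc (nat \<lceil>K * C * \<mu> + K\<rceil>)"
  have \<mu>: "0 \<le> \<mu>" and C: "0 \<le> C" unfolding \<mu>_def C_def by simp_all
  have n: "0 < real n" "K * C * \<mu> + K \<le> real n" unfolding n_def by linarith+
  have "0 \<le> K * C * \<mu>" using K \<mu> C by simp
  then have Kn: "0 \<le> K / n" "K / n \<le> 1" using K n by simp_all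
  have "\<phi> (K / n) \<le> C * (K / n)"
    using c[OF Kn] mult_right_mono[OF max.cobounded1[of c 0] Kn(1)] unfolding C_def by linarith
  then have "\<phi> (K / n) * \<mu> \<le> C * (K / n) * \<mu>" using \<mu> by (rule mult_right_mono)
  also have "\<dots> \<le> 1" using n K \<mu> C by (simp add: field_simps)
  finally have bound: "\<phi> (K / n) * \<mu> \<le> 1" .
  have "(\<integral>\<^sup>+ \<omega>. ennreal (\<phi> (cmod (g \<omega>) / n)) \<partial>M) \<le> (\<integral>\<^sup>+ \<omega>. ennreal (\<phi> (K / n)) \<partial>M)"
  proof (intro nn_integral_mono ennreal_leI)
    fix \<omega>
    show "\<phi> (cmod (g \<omega>) / n) \<le> \<phi> (K / n)"
      using g(2)[of \<omega>] n(1) Kn(1)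
      by (intro mono_onD[OF young_function_mono_on[OF \<phi>]]) (auto intro: divide_right_mono)
  qed
  also have "\<dots> = ennreal (\<phi> (K / n) * \<mu>)"
    using finite_measure.emeasure_eq_measure[OF M] young_function_nonneg[OF \<phi> Kn(1)] \<mu>
    by (simp add: \<mu>_def ennreal_mult)
  also have "\<dots> \<le> 1" using bound by simp
  finally show ?thesis using g(1) n(1) unfolding orlicz_space_def by auto
qed

lemma orlicz_modular_ge_level_set:
  assumes \<phi>: "young_function \<phi>" and A: "A \<in> sets M" and "0 \<le> a" "0 \<le> r"
    and level: "AE \<omega> in M. \<omega> \<in> A \<longrightarrow> a \<le> cmod (h \<omega>)"
  shows "ennreal (\<phi> (a / r)) * emeasure M A \<le> (\<integral>\<^sup>+ \<omega>. ennreal (\<phi> (cmod (h \<omega>) / r)) \<partial>M)"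
proof -
  have "AE \<omega> in M. ennreal (\<phi> (a / r)) * indicator A \<omega> \<le> ennreal (\<phi> (cmod (h \<omega>) / r))"
    using level
  proof eventually_elim
    case (elim \<omega>)
    then show ?case
      using assms(3,4) by (auto simp: indicator_def
          intro!: ennreal_leI mono_onD[OF young_function_mono_on[OF \<phi>]] divide_right_mono)
  qed
  then show ?thesis
    by (subst nn_integral_cmult_indicator[OF A, symmetric]) (rule nn_integral_mono_AE)
qed

lemma orlicz_space_level_sets:
  assumes M: "finite_measure M" and \<phi>: "young_function \<phi>" and h: "h \<in> orlicz_space M \<phi>"
    and A: "\<And>n. A n \<in> sets M" and a: "\<And>n. 0 \<le> a n"
    and level: "\<And>n. AE \<omega> in M. \<omega> \<in> A n \<longrightarrow> a n \<le> cmod (h \<omega>)"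
  obtains K :: nat where "0 < K" "\<phi> (a K / K) * measure M (A K) \<le> 1"
proof -
  obtain K :: nat where K: "0 < K" and modular: "(\<integral>\<^sup>+ \<omega>. ennreal (\<phi> (cmod (h \<omega>) / K)) \<partial>M) \<le> 1"
    using h unfolding orlicz_space_def by blast
  have "ennreal (\<phi> (a K / K)) * emeasure M (A K) \<le> (\<integral>\<^sup>+ \<omega>. ennreal (\<phi> (cmod (h \<omega>) / K)) \<partial>M)"
    by (rule orlicz_modular_ge_level_set[OF \<phi> A a _ level]) simp
  also note modular
  finally have "\<phi> (a K / K) * measure M (A K) \<le> 1"
    using young_function_nonneg[OF \<phi>, of "a K / K"] a[of K]
    by (simp add: finite_measure.emeasure_eq_measure[OF M] ennreal_mult[symmetric])
  with K show thesis by (rule that)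
qed

lemma not_AE_zero_level_set:
  fixes f :: "'a \<Rightarrow> 'b::real_normed_vector"
  assumes f[measurable]: "f \<in> borel_measurable M" and nonzero: "\<not> (AE \<omega> in M. f \<omega> = 0)"
  obtains \<epsilon> where "0 < \<epsilon>" "0 < emeasure M {\<omega> \<in> space M. \<epsilon> < norm (f \<omega>)}"
proof -
  define L where "L k = {\<omega> \<in> space M. 1 / Suc k < norm (f \<omega>)}" for k :: nat
  have L_sets: "L k \<in> sets M" for k unfolding L_def by measurable
  have "\<exists>k. 0 < emeasure M (L k)"
  proof (rule ccontr)
    assume "\<not> (\<exists>k. 0 < emeasure M (L k))"
    then have "(\<Union>k. L k) \<in> null_sets M"
      using L_sets by (auto intro!: null_sets_UN null_setsI)
    moreover have "{\<omega> \<in> space M. f \<omega> \<noteq> 0} \<subseteq> (\<Union>k. L k)"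
    proof safe
      fix \<omega> assume "\<omega> \<in> space M" "f \<omega> \<noteq> 0"
      then obtain k where "inverse (real (Suc k)) < norm (f \<omega>)"
        using reals_Archimedean zero_less_norm_iff by blast
      then show "\<omega> \<in> (\<Union>k. L k)" using \<open>\<omega> \<in> space M\<close> by (auto simp: L_def inverse_eq_divide)
    qed
    ultimately have "AE \<omega> in M. f \<omega> = 0" by (rule AE_I')
    then show False using nonzero by contradiction
  qed
  then obtain k where "0 < emeasure M (L k)" by blast
  then show thesis by (intro that[of "1 / Suc k"]) (simp_all add: L_def)
qed

lemma atomless_measure_split:
  assumes "finite_measure M" "atomless_measure M" "X \<in> sets M" "0 < emeasure M X"
  shows "\<exists>B. B \<in> sets M \<and> B \<subseteq> X \<and> 0 < emeasure M B \<and> 0 < emeasure M (X - B)"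
proof -
  obtain B where B: "B \<in> sets M" "B \<subseteq> X" "0 < emeasure M B" "emeasure M B < emeasure M X"
    using assms(2-4) unfolding atomless_measure_def by blast
  have "emeasure M (X - B) = emeasure M X - emeasure M B"
    using B assms(3) by (intro emeasure_Diff) (auto simp: finite_measure.emeasure_finite[OF assms(1)])
  then show ?thesis using B by (intro exI[of _ B]) (simp add: diff_gr0_ennreal)
qed

lemma atomless_measure_disjoint_family:
  assumes M: "finite_measure M" and "atomless_measure M"
    and E: "E \<in> sets M" "0 < emeasure M E"
  obtains e :: "nat \<Rightarrow> 'a set" where "disjoint_family e"
    "\<And>n. e n \<in> sets M" "\<And>n. e n \<subseteq> E" "\<And>n. 0 < emeasure M (e n)"
proof -
  define split where
    "split X = (SOME B. B \<in> sets M \<and> B \<subseteq> X \<and> 0 < emeasure M B \<and> 0 < emeasure M (X - B))" for X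
  have split: "split X \<in> sets M \<and> split X \<subseteq> X \<and> 0 < emeasure M (split X) \<and> 0 < emeasure M (X - split X)"
    if "X \<in> sets M" "0 < emeasure M X" for X
    unfolding split_def by (rule someI_ex[OF atomless_measure_split[OF assms(1,2) that]])
  define R where "R = rec_nat E (\<lambda>_ X. X - split X)"
  have R_Suc: "R (Suc n) = R n - split (R n)" for n by (simp add: R_def)
  have R: "R n \<in> sets M \<and> R n \<subseteq> E \<and> 0 < emeasure M (R n)" for n
  proof (induction n)
    case (Suc n)
    then show ?case using split[of "R n"] unfolding R_Suc by blast
  qed (simp add: R_def E)
  define e where "e n = split (R n)" for n
  have disj: "e i \<inter> e j = {}" if "i < j" for i j
  proof -
    have "e j \<subseteq> R j" using split[of "R j"] R[of j] by (simp add: e_def)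
    also have "R j \<subseteq> R (Suc i)"
      by (rule lift_Suc_antimono_le[of R]) (use that in \<open>auto simp: R_Suc\<close>)
    also have "\<dots> = R i - e i" by (simp add: R_Suc e_def)
    finally show ?thesis by blast
  qed
  show thesis
  proof (rule that)
    show "disjoint_family e" unfolding disjoint_family_on_def
    proof (intro ballI impI)
      fix i j :: nat assume "i \<noteq> j"
      then show "e i \<inter> e j = {}" using disj[of i j] disj[of j i] by (cases "i < j") auto
    qed
  qed (use split R in \<open>auto simp: e_def\<close>)
qed

definition gauss_round :: "nat \<Rightarrow> complex \<Rightarrow> complex" where
  "gauss_round N z = (of_int \<lfloor>N * Re z\<rfloor> + \<i> * of_int \<lfloor>N * Im z\<rfloor>) / of_nat N"

lemma norm_scaled_gauss_round_error: "cmod (of_nat N * (z - gauss_round N z)) \<le> 2"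
proof (cases "N = 0")
  case False
  then have "of_nat N * (z - gauss_round N z) =
      Complex (N * Re z - \<lfloor>N * Re z\<rfloor>) (N * Im z - \<lfloor>N * Im z\<rfloor>)"
    by (simp add: gauss_round_def complex_eq_iff field_simps)
  also have "cmod \<dots> \<le> 2"
    by (rule order_trans[OF cmod_le]) (simp, linarith)
  finally show ?thesis .
qed simp

lemma norm_gauss_round_le: "cmod (gauss_round N z) \<le> cmod z + 2"
proof (cases "N = 0")
  case False
  have "cmod (z - gauss_round N z) \<le> cmod (of_nat N * (z - gauss_round N z))"
    using False mult_right_mono[of 1 "real N" "cmod (z - gauss_round N z)"] by (simp add: norm_mult)
  also have "\<dots> \<le> 2" by (rule norm_scaled_gauss_round_error)
  finally show ?thesis using norm_triangle_sub[of "gauss_round N z" z] by (simp add: norm_minus_commute)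
qed (simp add: gauss_round_def)

lemma countable_range_gauss_round: "countable (range (gauss_round N))"
proof (rule countable_subset)
  show "range (gauss_round N) \<subseteq> (\<lambda>(a, b). (of_int a + \<i> * of_int b) / of_nat N) ` UNIV"
    by (auto simp: gauss_round_def)
qed simp

lemma borel_measurable_gauss_round[measurable]:
  assumes [measurable]: "f \<in> borel_measurable M"
  shows "(\<lambda>\<omega>. gauss_round N (f \<omega>)) \<in> borel_measurable M"
  unfolding gauss_round_def by measurable

definition piecewise :: "(nat \<Rightarrow> 'a set) \<Rightarrow> (nat \<Rightarrow> 'a \<Rightarrow> 'b::real_normed_algebra_1) \<Rightarrow> 'a \<Rightarrow> 'b" where
  "piecewise e c \<omega> = (\<Sum>j. indicator (e j) \<omega> * c j \<omega>)"

lemma indicator_disjoint_family_mult: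
  fixes c :: "nat \<Rightarrow> 'a \<Rightarrow> 'b::real_normed_algebra_1"
  assumes "disjoint_family e" "\<omega> \<in> e j"
  shows "(\<lambda>i. indicator (e i) \<omega> * c i \<omega>) = (\<lambda>i. if i = j then c j \<omega> else 0)"
proof
  fix i
  show "indicator (e i) \<omega> * c i \<omega> = (if i = j then c j \<omega> else 0)"
  proof (cases "i = j")
    case False
    then have "\<omega> \<notin> e i" using assms unfolding disjoint_family_on_def by blast
    then show ?thesis using False by simp
  qed (use assms(2) in simp)
qed

lemma piecewise_sums:
  assumes "disjoint_family e"
  shows "(\<lambda>j. indicator (e j) \<omega> * c j \<omega>) sums piecewise e c \<omega>"
proof (cases "\<exists>j. \<omega> \<in> e j")
  case True
  then obtain j where "\<omega> \<in> e j" ..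
  then have "(\<lambda>i. indicator (e i) \<omega> * c i \<omega>) sums c j \<omega>"
    using sums_single[of j "\<lambda>_. c j \<omega>"] by (simp add: indicator_disjoint_family_mult[OF assms])
  then show ?thesis by (simp add: piecewise_def sums_iff)
qed (simp add: piecewise_def)

lemma piecewise_eq:
  assumes "disjoint_family e" "\<omega> \<in> e j"
  shows "piecewise e c \<omega> = c j \<omega>"
  using sums_single[of j "\<lambda>_. c j \<omega>"]
  by (simp add: piecewise_def indicator_disjoint_family_mult[OF assms] sums_iff)

lemma norm_piecewise_le:
  assumes "disjoint_family e" "\<And>j. norm (c j \<omega>) \<le> B" "0 \<le> B"
  shows "norm (piecewise e c \<omega>) \<le> B"
proof (cases "\<exists>j. \<omega> \<in> e j")
  case True
  then obtain j where "\<omega> \<in> e j" ..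
  then show ?thesis using assms(2) by (simp add: piecewise_eq[OF assms(1)])
qed (use assms(3) in \<open>simp add: piecewise_def\<close>)

lemma borel_measurable_piecewise:
  fixes c :: "nat \<Rightarrow> 'a \<Rightarrow> 'b::{real_normed_algebra_1, second_countable_topology}"
  assumes "disjoint_family e" "\<And>j. e j \<in> sets M" "\<And>j. c j \<in> borel_measurable M"
  shows "piecewise e c \<in> borel_measurable M"
proof (rule borel_measurable_LIMSEQ_metric)
  show "(\<lambda>\<omega>. \<Sum>j<n. indicator (e j) \<omega> * c j \<omega>) \<in> borel_measurable M" for n
    using assms(2,3) by measurable
  show "(\<lambda>n. \<Sum>j<n. indicator (e j) \<omega> * c j \<omega>) \<longlonglongrightarrow> piecewise e c \<omega>" for \<omega>
    using piecewise_sums[OF assms(1)] unfolding sums_def .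
qed

locale derivation_on_function_algebra =
  fixes M :: "'a measure" and A :: "('a \<Rightarrow> complex) set"
    and \<delta> :: "('a \<Rightarrow> complex) \<Rightarrow> ('a \<Rightarrow> complex)"
  assumes finite_measure: "finite_measure M"
    and domain_measurable: "A \<subseteq> borel_measurable M"
    and bounded_in_domain: "\<And>g K. g \<in> borel_measurable M \<Longrightarrow> (\<And>\<omega>. cmod (g \<omega>) \<le> K) \<Longrightarrow> g \<in> A"
    and derivation: "additive_derivation_on M A \<delta>"
begin

lemma derivation_in_domain: "x \<in> A \<Longrightarrow> \<delta> x \<in> A"
  using derivation unfolding additive_derivation_on_def by blast

lemma derivation_measurable: "x \<in> A \<Longrightarrow> \<delta> x \<in> borel_measurable M"
  using derivation_in_domain domain_measurable by blast

lemma derivation_add: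
  "x \<in> A \<Longrightarrow> y \<in> A \<Longrightarrow> AE \<omega> in M. \<delta> (\<lambda>w. x w + y w) \<omega> = \<delta> x \<omega> + \<delta> y \<omega>"
  using derivation unfolding additive_derivation_on_def by blast

lemma derivation_mult:
  "x \<in> A \<Longrightarrow> y \<in> A \<Longrightarrow> AE \<omega> in M. \<delta> (\<lambda>w. x w * y w) \<omega> = \<delta> x \<omega> * y \<omega> + x \<omega> * \<delta> y \<omega>"
  using derivation unfolding additive_derivation_on_def by blast

lemma const_in_domain[simp]: "(\<lambda>_. c) \<in> A"
  by (rule bounded_in_domain[of _ "cmod c"]) simp_all

lemma indicator_in_domain: "S \<in> sets M \<Longrightarrow> (indicator S :: 'a \<Rightarrow> complex) \<in> A"
  by (rule bounded_in_domain[of _ 1]) (simp_all add: indicator_def)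

lemma derivation_diff:
  assumes "x \<in> A" "y \<in> A" "(\<lambda>w. x w - y w) \<in> A"
  shows "AE \<omega> in M. \<delta> (\<lambda>w. x w - y w) \<omega> = \<delta> x \<omega> - \<delta> y \<omega>"
  using derivation_add[OF assms(3,2)] by eventually_elim simp

definition constant_kernel :: "complex set" where
  "constant_kernel = {c. AE \<omega> in M. \<delta> (\<lambda>_. c) \<omega> = 0}"

lemma constant_kernel_add:
  assumes "a \<in> constant_kernel" "b \<in> constant_kernel"
  shows "a + b \<in> constant_kernel"
  using assms derivation_add[OF const_in_domain const_in_domain, of a b]
  unfolding constant_kernel_def mem_Collect_eq by eventually_elim simp

lemma constant_kernel_mult:
  assumes "a \<in> constant_kernel" "b \<in> constant_kernel"
  shows "a * b \<in> constant_kernel"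
  using assms derivation_mult[OF const_in_domain const_in_domain, of a b]
  unfolding constant_kernel_def mem_Collect_eq by eventually_elim simp

lemma one_in_constant_kernel: "1 \<in> constant_kernel"
  using derivation_mult[OF const_in_domain const_in_domain, of 1 1]
  unfolding constant_kernel_def mem_Collect_eq by eventually_elim simp

lemma zero_in_constant_kernel: "0 \<in> constant_kernel"
  using derivation_add[OF const_in_domain const_in_domain, of 0 0]
  unfolding constant_kernel_def mem_Collect_eq by eventually_elim simp

lemma constant_kernel_uminus:
  assumes "a \<in> constant_kernel"
  shows "- a \<in> constant_kernel"
  using assms zero_in_constant_kernel derivation_add[OF const_in_domain const_in_domain, of a "- a"]
  unfolding constant_kernel_def mem_Collect_eq by eventually_elim simp

lemma constant_kernel_inverse:
  assumes "a \<in> constant_kernel"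
  shows "inverse a \<in> constant_kernel"
proof (cases "a = 0")
  case False
  show ?thesis
    using assms one_in_constant_kernel derivation_mult[OF const_in_domain const_in_domain, of a "inverse a"]
    unfolding constant_kernel_def mem_Collect_eq by eventually_elim (use False in simp)
qed (simp add: zero_in_constant_kernel)

lemma ii_in_constant_kernel: "\<i> \<in> constant_kernel"
  using constant_kernel_uminus[OF one_in_constant_kernel]
    derivation_mult[OF const_in_domain const_in_domain, of \<i> \<i>]
  unfolding constant_kernel_def mem_Collect_eq by eventually_elim simp

lemma of_nat_in_constant_kernel: "of_nat n \<in> constant_kernel"
  by (induction n) (simp_all add: zero_in_constant_kernel constant_kernel_add one_in_constant_kernel)

lemma of_int_in_constant_kernel: "of_int n \<in> constant_kernel"
  by (cases n rule: int_cases2) (simp_all add: of_nat_in_constant_kernel constant_kernel_uminus)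

lemma gauss_round_in_constant_kernel: "gauss_round N z \<in> constant_kernel"
  unfolding gauss_round_def divide_inverse
  by (intro constant_kernel_mult constant_kernel_add constant_kernel_inverse
      of_int_in_constant_kernel ii_in_constant_kernel of_nat_in_constant_kernel)

lemma derivation_indicator:
  assumes "S \<in> sets M"
  shows "AE \<omega> in M. \<delta> (indicator S) \<omega> = 0"
proof -
  have square: "(\<lambda>w. indicator S w * indicator S w :: complex) = indicator S"
    by (auto simp: indicator_def)
  show ?thesis
    using derivation_mult[OF indicator_in_domain[OF assms] indicator_in_domain[OF assms]]
    unfolding square
  proof eventually_elim
    case (elim \<omega>)
    then show ?case by (cases "\<omega> \<in> S") simp_all
  qed
qed

lemma derivation_indicator_mult:
  assumes "S \<in> sets M" "y \<in> A"
  shows "AE \<omega> in M. \<delta> (\<lambda>w. indicator S w * y w) \<omega> = indicator S \<omega> * \<delta> y \<omega>"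
  using derivation_mult[OF indicator_in_domain[OF assms(1)] assms(2)] derivation_indicator[OF assms(1)]
  by eventually_elim simp

lemma derivation_local:
  assumes "S \<in> sets M" "x \<in> A" "y \<in> A" "\<And>\<omega>. \<omega> \<in> S \<Longrightarrow> x \<omega> = y \<omega>"
  shows "AE \<omega> in M. \<omega> \<in> S \<longrightarrow> \<delta> x \<omega> = \<delta> y \<omega>"
proof -
  have restrict: "(\<lambda>w. indicator S w * x w) = (\<lambda>w. indicator S w * y w)"
    using assms(4) by (auto simp: indicator_def)
  show ?thesis
    using derivation_indicator_mult[OF assms(1,2)] derivation_indicator_mult[OF assms(1,3)]
    unfolding restrict by eventually_elim (auto simp: indicator_def)
qed

lemma derivation_const_mult:
  assumes "c \<in> constant_kernel" "y \<in> A"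
  shows "AE \<omega> in M. \<delta> (\<lambda>w. c * y w) \<omega> = c * \<delta> y \<omega>"
  using assms(1) derivation_mult[OF const_in_domain assms(2), of c]
  unfolding constant_kernel_def mem_Collect_eq by eventually_elim simp

lemma derivation_countably_valued:
  assumes "countable C" "C \<subseteq> constant_kernel" "y \<in> A" "range y \<subseteq> C"
  shows "AE \<omega> in M. \<delta> y \<omega> = 0"
proof -
  have "AE \<omega> in M. y \<omega> = c \<longrightarrow> \<delta> y \<omega> = 0" if "c \<in> C" for c
  proof -
    have S: "y -` {c} \<inter> space M \<in> sets M"
      using assms(3) domain_measurable by (auto intro: measurable_sets)
    have "AE \<omega> in M. \<omega> \<in> y -` {c} \<inter> space M \<longrightarrow> \<delta> y \<omega> = \<delta> (\<lambda>_. c) \<omega>"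
      by (rule derivation_local[OF S assms(3) const_in_domain]) simp
    moreover have "AE \<omega> in M. \<delta> (\<lambda>_. c) \<omega> = 0"
      using assms(2) that unfolding constant_kernel_def by blast
    ultimately show ?thesis
      using AE_space by eventually_elim auto
  qed
  then have "AE \<omega> in M. \<forall>c\<in>C. y \<omega> = c \<longrightarrow> \<delta> y \<omega> = 0"
    by (subst AE_ball_countable[OF assms(1)]) blast
  then show ?thesis by (rule eventually_mono) (use assms(4) in auto)
qed

lemma derivation_scaled_rounding_error:
  assumes [measurable]: "g \<in> borel_measurable M" and bounded: "\<And>\<omega>. cmod (g \<omega>) \<le> K"
  shows "AE \<omega> in M. \<delta> (\<lambda>w. of_nat N * (g w - gauss_round N (g w))) \<omega> = of_nat N * \<delta> g \<omega>"
proof -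
  have g: "g \<in> A" using bounded by (rule bounded_in_domain[rotated]) simp
  have round: "(\<lambda>w. gauss_round N (g w)) \<in> A"
    using order_trans[OF norm_gauss_round_le add_right_mono[OF bounded]]
    by (rule bounded_in_domain[rotated]) simp
  have error: "(\<lambda>w. g w - gauss_round N (g w)) \<in> A"
    using order_trans[OF norm_triangle_ineq4 add_mono[OF bounded order_trans[OF norm_gauss_round_le
          add_right_mono[OF bounded]]]]
    by (rule bounded_in_domain[rotated]) simp
  have "AE \<omega> in M. \<delta> (\<lambda>w. gauss_round N (g w)) \<omega> = 0"
    using gauss_round_in_constant_kernel
    by (intro derivation_countably_valued[OF countable_range_gauss_round _ round]) auto
  then show ?thesis
    using derivation_diff[OF g round error] derivation_const_mult[OF of_nat_in_constant_kernel error, of N]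
    by eventually_elim (simp add: right_diff_distrib)
qed

lemma derivation_piecewise_scaling:
  fixes e :: "nat \<Rightarrow> 'a set" and N :: "nat \<Rightarrow> nat"
  assumes g[measurable]: "g \<in> borel_measurable M" and bounded: "\<And>\<omega>. cmod (g \<omega>) \<le> K"
    and e: "disjoint_family e" "\<And>n. e n \<in> sets M"
  obtains y where "y \<in> A" "\<And>n. AE \<omega> in M. \<omega> \<in> e n \<longrightarrow> \<delta> y \<omega> = of_nat (N n) * \<delta> g \<omega>"
proof -
  define c where "c n = (\<lambda>w. of_nat (N n) * (g w - gauss_round (N n) (g w)))" for n
  have c: "c n \<in> A" for n
    using norm_scaled_gauss_round_error unfolding c_def by (intro bounded_in_domain) simp_all
  have y: "piecewise e c \<in> A"
    using borel_measurable_piecewise[OF e, of c] norm_piecewise_le[OF e(1), of c _ 2]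
      norm_scaled_gauss_round_error
    unfolding c_def by (intro bounded_in_domain) simp_all
  have "AE \<omega> in M. \<omega> \<in> e n \<longrightarrow> \<delta> (piecewise e c) \<omega> = of_nat (N n) * \<delta> g \<omega>" for n
  proof -
    have "AE \<omega> in M. \<omega> \<in> e n \<longrightarrow> \<delta> (piecewise e c) \<omega> = \<delta> (c n) \<omega>"
      by (rule derivation_local[OF e(2) y c]) (simp add: piecewise_eq[OF e(1)])
    then show ?thesis
      using derivation_scaled_rounding_error[OF g bounded, of "N n"] by eventually_elim (simp add: c_def)
  qed
  with y show thesis by (rule that)
qed

lemma derivation_bounded_vanishes:
  assumes atomless: "atomless_measure M" and orlicz: "A \<subseteq> orlicz_space M \<phi>"
    and \<phi>: "young_function \<phi>"
    and g[measurable]: "g \<in> borel_measurable M" and bounded: "\<And>\<omega>. cmod (g \<omega>) \<le> K"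
  shows "AE \<omega> in M. \<delta> g \<omega> = 0"
proof (rule ccontr)
  assume "\<not> (AE \<omega> in M. \<delta> g \<omega> = 0)"
  then obtain \<epsilon> where \<epsilon>: "0 < \<epsilon>" and E: "0 < emeasure M {\<omega> \<in> space M. \<epsilon> < cmod (\<delta> g \<omega>)}"
    by (rule not_AE_zero_level_set[OF derivation_measurable[OF bounded_in_domain[OF g bounded]]])
  define E where "E = {\<omega> \<in> space M. \<epsilon> < cmod (\<delta> g \<omega>)}"
  have E_sets: "E \<in> sets M"
    unfolding E_def using derivation_measurable[OF bounded_in_domain[OF g bounded]] by measurable
  obtain e :: "nat \<Rightarrow> 'a set" where e: "disjoint_family e" "\<And>n. e n \<in> sets M" "\<And>n. e n \<subseteq> E"
      "\<And>n. 0 < emeasure M (e n)"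
    using atomless_measure_disjoint_family[OF finite_measure atomless E_sets E[folded E_def]] by blast
  have e_measure: "0 < measure M (e n)" for n
    using e(4)[of n] by (simp add: finite_measure.emeasure_eq_measure[OF finite_measure])
  \<comment> \<open>\<open>N n\<close> is large enough that \<open>|\<delta> y| \<ge> N n \<epsilon>\<close> on \<open>e n\<close> breaks the Orlicz bound at scale \<open>n\<close>.\<close>
  have "\<forall>n. \<exists>N. 0 < n \<longrightarrow> 2 / measure M (e n) \<le> \<phi> (real N * (\<epsilon> / n))"
  proof
    fix n :: nat
    show "\<exists>N. 0 < n \<longrightarrow> 2 / measure M (e n) \<le> \<phi> (real N * (\<epsilon> / n))"
      using young_function_exceeds[OF \<phi>, of "\<epsilon> / n" "2 / measure M (e n)"] \<epsilon>
      by (cases "n = 0") auto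
  qed
  then obtain N where N: "\<forall>n. 0 < n \<longrightarrow> 2 / measure M (e n) \<le> \<phi> (real (N n) * (\<epsilon> / n))"
    by (rule choice[THEN exE])
  obtain y where y: "y \<in> A" and scaled: "AE \<omega> in M. \<omega> \<in> e n \<longrightarrow> \<delta> y \<omega> = of_nat (N n) * \<delta> g \<omega>" for n
    using derivation_piecewise_scaling[OF g bounded e(1,2)] by blast
  have level: "AE \<omega> in M. \<omega> \<in> e n \<longrightarrow> real (N n) * \<epsilon> \<le> cmod (\<delta> y \<omega>)" for n
    using scaled[of n]
  proof eventually_elim
    case (elim \<omega>)
    show ?case
    proof
      assume "\<omega> \<in> e n"
      then have "\<epsilon> < cmod (\<delta> g \<omega>)" using e(3)[of n] by (auto simp: E_def)
      then show "real (N n) * \<epsilon> \<le> cmod (\<delta> y \<omega>)"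
        using elim \<open>\<omega> \<in> e n\<close> by (simp add: norm_mult mult_left_mono)
    qed
  qed
  have "\<delta> y \<in> orlicz_space M \<phi>" using orlicz derivation_in_domain[OF y] by blast
  then obtain K :: nat where K: "0 < K" and "\<phi> (real (N K) * \<epsilon> / K) * measure M (e K) \<le> 1"
    by (rule orlicz_space_level_sets[OF finite_measure \<phi> _ e(2) _ level]) (use \<epsilon> in simp)
  moreover have "2 \<le> \<phi> (real (N K) * \<epsilon> / K) * measure M (e K)"
    using N[rule_format, OF K] e_measure[of K] by (simp add: pos_divide_le_eq)
  ultimately show False by linarith
qed

lemma derivation_vanishes:
  assumes atomless: "atomless_measure M" and orlicz: "A \<subseteq> orlicz_space M \<phi>"
    and \<phi>: "young_function \<phi>" and x: "x \<in> A"
  shows "AE \<omega> in M. \<delta> x \<omega> = 0"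
proof -
  have [measurable]: "x \<in> borel_measurable M" using x domain_measurable by blast
  define S where "S m = {\<omega> \<in> space M. cmod (x \<omega>) \<le> real m}" for m :: nat
  have S_sets: "S m \<in> sets M" for m unfolding S_def by measurable
  have truncated: "AE \<omega> in M. \<omega> \<in> S m \<longrightarrow> \<delta> x \<omega> = 0" for m
  proof -
    define x\<^sub>m where "x\<^sub>m = (\<lambda>\<omega>. if cmod (x \<omega>) \<le> real m then x \<omega> else 0)"
    have [measurable]: "x\<^sub>m \<in> borel_measurable M" unfolding x\<^sub>m_def by measurable
    have bound: "cmod (x\<^sub>m \<omega>) \<le> real m" for \<omega> by (simp add: x\<^sub>m_def)
    have "AE \<omega> in M. \<omega> \<in> S m \<longrightarrow> \<delta> x \<omega> = \<delta> x\<^sub>m \<omega>"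
      by (rule derivation_local[OF S_sets x bounded_in_domain[OF _ bound]]) (simp_all add: S_def x\<^sub>m_def)
    moreover have "AE \<omega> in M. \<delta> x\<^sub>m \<omega> = 0"
      by (rule derivation_bounded_vanishes[OF atomless orlicz \<phi> _ bound]) simp
    ultimately show ?thesis by eventually_elim simp
  qed
  have "AE \<omega> in M. \<forall>m. \<omega> \<in> S m \<longrightarrow> \<delta> x \<omega> = 0"
    by (intro AE_all_countable[THEN iffD2] allI truncated)
  then show ?thesis using AE_space
  proof eventually_elim
    case (elim \<omega>)
    obtain m :: nat where "cmod (x \<omega>) \<le> real m" using real_arch_simple by blast
    then have "\<omega> \<in> S m" using elim(2) by (simp add: S_def)
    then show ?case using elim(1) by blast
  qed
qed

end

theorem corollary3p1:
  fixes M :: "'a measure" and \<Lambda> :: "(real \<Rightarrow> real) set"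
    and \<delta> :: "('a \<Rightarrow> complex) \<Rightarrow> ('a \<Rightarrow> complex)"
  assumes "finite_measure M"
    and "atomless_measure M"
    and "\<Lambda> \<noteq> {}"
    and "quadratic_family \<Lambda>"
    and "additive_derivation_on M (orlicz_intersection M \<Lambda>) \<delta>"
  shows "\<forall>x\<in>orlicz_intersection M \<Lambda>. AE \<omega> in M. \<delta> x \<omega> = 0"
proof -
  have young: "young_function \<psi>" if "\<psi> \<in> \<Lambda>" for \<psi>
    using assms(4) that unfolding quadratic_family_def by blast
  interpret derivation_on_function_algebra M "orlicz_intersection M \<Lambda>" \<delta>
  proof (rule derivation_on_function_algebra.intro)
    show "finite_measure M" by (rule assms(1))
    show "orlicz_intersection M \<Lambda> \<subseteq> borel_measurable M" unfolding orlicz_intersection_def by blast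
    show "g \<in> orlicz_intersection M \<Lambda>" if "g \<in> borel_measurable M" "\<And>\<omega>. cmod (g \<omega>) \<le> K" for g K
      using orlicz_space_bounded[OF assms(1) young that] that(1) unfolding orlicz_intersection_def by blast
    show "additive_derivation_on M (orlicz_intersection M \<Lambda>) \<delta>" by (rule assms(5))
  qed
  obtain \<phi> where "\<phi> \<in> \<Lambda>" using assms(3) by blast
  then have "orlicz_intersection M \<Lambda> \<subseteq> orlicz_space M \<phi>" unfolding orlicz_intersection_def by blast
  then show ?thesis using derivation_vanishes[OF assms(2) _ young[OF \<open>\<phi> \<in> \<Lambda>\<close>]] by blast
qed

end
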